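(* Let $\Sigma$ be a finite alphabet, $L \subseteq \Sigma^*$ regular, and $\mathcal{A}=(Q,\Sigma,q_0,\delta,F)$ its minimal DFA. Then $L\in\mathsf{F}(\mathcal{O}(1))$ if and only if for all $x,y \in \Sigma^*$ with $|x|=|y|$ and all $z \in \Sigma^{|Q|}$ we have $\mathcal{A}(xz) = \mathcal{A}(yz)$.
   Context: $\mathcal{A}(w)=\delta(q_0,w)$ denotes the state reached on input $w$. Fix $a\in\Sigma$; $\mathrm{last}_n(a_1\cdots a_m)=a_{m-n+1}\cdots a_m$ if $n\le m$, else $a^{n-m}a_1\cdots a_m$. A fixed-size sliding window algorithm for $L$ is a sequence $(\mathcal{A}_n)_{n\ge0}$ of deterministic (possibly infinite-state) automata with injective encodings of states into bit strings, $\mathcal{A}_n$ accepting $\{w:\mathrm{last}_n(w)\in L\}$; its space complexity at $n$ is the maximal encoding length of a state of $\mathcal{A}_n$. $\mathsf{F}(\mathcal{O}(1))$ is the class of languages having such an algorithm with constant space complexity. *)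

theory Defs
  imports Main
begin

definition dfa :: "'s set \<Rightarrow> 's \<Rightarrow> ('s \<Rightarrow> 'a \<Rightarrow> 's) \<Rightarrow> 's set \<Rightarrow> bool" where
  "dfa Q q0 \<delta> F \<longleftrightarrow> finite Q \<and> q0 \<in> Q \<and> (\<forall>q\<in>Q. \<forall>s. \<delta> q s \<in> Q) \<and> F \<subseteq> Q"

definition dfa_lang :: "'s \<Rightarrow> ('s \<Rightarrow> 'a \<Rightarrow> 's) \<Rightarrow> 's set \<Rightarrow> 'a list set" where
  "dfa_lang q0 \<delta> F = {w. foldl \<delta> q0 w \<in> F}"

definition regular :: "'a list set \<Rightarrow> bool" where
  "regular L \<longleftrightarrow> (\<exists>(Q::nat set) q0 \<delta> F. dfa Q q0 \<delta> F \<and> L = dfa_lang q0 \<delta> F)"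

definition minimal_dfa :: "'a list set \<Rightarrow> 's set \<Rightarrow> 's \<Rightarrow> ('s \<Rightarrow> 'a \<Rightarrow> 's) \<Rightarrow> 's set \<Rightarrow> bool" where
  "minimal_dfa L Q q0 \<delta> F \<longleftrightarrow> dfa Q q0 \<delta> F \<and> L = dfa_lang q0 \<delta> F
     \<and> (\<forall>q\<in>Q. \<exists>w. foldl \<delta> q0 w = q)
     \<and> (\<forall>p\<in>Q. \<forall>q\<in>Q. p \<noteq> q \<longrightarrow> (\<exists>w. (foldl \<delta> p w \<in> F) \<noteq> (foldl \<delta> q w \<in> F)))"

definition last_n :: "'a \<Rightarrow> nat \<Rightarrow> 'a list \<Rightarrow> 'a list" where
  "last_n a n w = (if n \<le> length w then drop (length w - n) w
                   else replicate (n - length w) a @ w)"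

text \<open>States of A_n are identified with their
  (injective) bit-string encodings, so A_n is given by a state set Qs n of bit strings,
  an initial state, a transition function and a set of accepting states.\<close>
definition sliding_window_alg ::
  "'a \<Rightarrow> 'a list set \<Rightarrow> (nat \<Rightarrow> bool list set) \<Rightarrow> (nat \<Rightarrow> bool list)
    \<Rightarrow> (nat \<Rightarrow> bool list \<Rightarrow> 'a \<Rightarrow> bool list) \<Rightarrow> (nat \<Rightarrow> bool list set) \<Rightarrow> bool" where
  "sliding_window_alg a L Qs init dl acc \<longleftrightarrow>
     (\<forall>n. init n \<in> Qs n \<and> (\<forall>q\<in>Qs n. \<forall>s. dl n q s \<in> Qs n) \<and> acc n \<subseteq> Qs n
        \<and> (\<forall>w. foldl (dl n) (init n) w \<in> acc n \<longleftrightarrow> last_n a n w \<in> L))"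

text \<open>Class F(O(1)): a sliding window algorithm whose space complexity
  (maximal encoding length of a state of A_n) is bounded by a constant.\<close>
definition in_F_O1 :: "'a \<Rightarrow> 'a list set \<Rightarrow> bool" where
  "in_F_O1 a L \<longleftrightarrow> (\<exists>Qs init dl acc (c::nat). sliding_window_alg a L Qs init dl acc
       \<and> (\<forall>n. \<forall>q\<in>Qs n. length q \<le> c))"

end

theory Submission
  imports Defs
begin

text \<open>
  A sliding window algorithm with constant space has, uniformly in the window size n,
  at most some number M of states. If two words x, y of equal length are followed by a
  suffix z of length at least M^2, the pair of runs on x z and y z repeats a state pair
  while reading z; pumping the loop n times pushes x and y out of the window without
  changing either run, so x z and y z are accepted alike. In the minimal DFA this makes
  A(x w) = A(y w) for all w of length M^2, and since the relations "every word of
  length j merges p and q" form a chain of equivalences that stabilises within |Q|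
  steps, already words of length |Q| merge A(x) and A(y).
  Conversely, if the last |Q| symbols determine the state, an algorithm that stores
  the last min(n, |Q|) symbols and pads with a decides membership of the window.
\<close>

lemma length_last_n [simp]: "length (last_n a n w) = n"
  by (simp add: last_n_def)

lemma last_n_Nil: "last_n a n [] = replicate n a"
  by (simp add: last_n_def)

lemma last_n_length_eq: "length w = n \<Longrightarrow> last_n a n w = w"
  by (simp add: last_n_def)

lemma last_n_append_long: "n \<le> length v \<Longrightarrow> last_n a n (u @ v) = last_n a n v"
  by (simp add: last_n_def)

lemma last_n_snoc: "last_n a n (w @ [s]) = tl (last_n a n w @ [s])"
proof (cases "n \<le> length w")
  case True
  then show ?thesis
    by (cases n) (auto simp: last_n_def tl_append_if tl_drop Suc_diff_Suc simp flip: drop_Suc)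
next
  case False
  then show ?thesis
    by (cases "n - length w") (auto simp: last_n_def)
qed

lemma last_n_split:
  assumes "k \<le> n"
  shows "last_n a n w = take (n - k) (last_n a n w) @ last_n a k w"
proof -
  have "drop (n - k) (last_n a n w) = last_n a k w"
    using assms by (auto simp: last_n_def)
  then show ?thesis
    by (metis append_take_drop_id)
qed

lemma foldl_concat_replicate_loop:
  "foldl g s v = s \<Longrightarrow> foldl g s (concat (replicate r v)) = s"
  by (induction r) auto

lemma foldl_pump:
  assumes "foldl g s (u @ v) = foldl g s u"
  shows "foldl g s (u @ concat (replicate r v) @ w) = foldl g s (u @ v @ w)"
  using assms foldl_concat_replicate_loop[of g "foldl g s u" v r] by simp

lemma foldl_pair:
  "foldl (\<lambda>(p, q) c. (g p c, g q c)) (p, q) w = (foldl g p w, foldl g q w)"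
  by (induction w arbitrary: p q) auto

lemma foldl_loop_exists:
  assumes "finite B" and run_in: "\<And>w. foldl g s w \<in> B" and long: "card B \<le> length z"
  obtains u v w where "z = u @ v @ w" "v \<noteq> []" "foldl g s (u @ v) = foldl g s u"
proof -
  let ?state = "\<lambda>i. foldl g s (take i z)"
  have "?state ` {0..card B} \<subseteq> B"
    using run_in by blast
  then have "card (?state ` {0..card B}) \<le> card B"
    using card_mono[OF \<open>finite B\<close>] by blast
  then have "\<not> inj_on ?state {0..card B}"
    by (intro pigeonhole) simp
  then obtain i j where ij: "i < j" "j \<le> card B" "?state i = ?state j"
    unfolding inj_on_def by (auto simp: neq_iff)
  define v where "v = drop i (take j z)"
  have take_j: "take j z = take i z @ v"
    using \<open>i < j\<close> unfolding v_def by (metis append_take_drop_id min.absorb1 less_imp_le take_take)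
  show ?thesis
  proof (rule that)
    show "z = take i z @ v @ drop j z"
      using take_j by (metis append.assoc append_take_drop_id)
    show "v \<noteq> []"
      using ij long unfolding v_def by simp
    show "foldl g s (take i z @ v) = foldl g s (take i z)"
      using ij(3) take_j by simp
  qed
qed

lemma sliding_window_run_closed:
  assumes "sliding_window_alg a L Qs init dl acc"
  shows "foldl (dl n) (init n) w \<in> Qs n"
  using assms unfolding sliding_window_alg_def
  by (induction w rule: rev_induct) auto

lemma sliding_window_accepts:
  assumes "sliding_window_alg a L Qs init dl acc"
  shows "foldl (dl n) (init n) w \<in> acc n \<longleftrightarrow> last_n a n w \<in> L"
  using assms unfolding sliding_window_alg_def by blast

lemma in_F_O1_long_suffix_determines:
  assumes "in_F_O1 a L"
  obtains K where "\<And>x y z. length x = length y \<Longrightarrow> K \<le> length z \<Longrightarrow> x @ z \<in> L \<longleftrightarrow> y @ z \<in> L"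
proof -
  obtain Qs init dl acc c where SW: "sliding_window_alg a L Qs init dl acc"
    and bounded: "\<And>n q. q \<in> Qs n \<Longrightarrow> length q \<le> c"
    using assms unfolding in_F_O1_def by blast
  have run_bounded: "length (foldl (dl n) (init n) w) \<le> c" for n w
    using sliding_window_run_closed[OF SW] bounded by blast
  define B where "B = {bs :: bool list. length bs \<le> c}"
  have "finite B"
    unfolding B_def using finite_lists_length_le[of "UNIV :: bool set" c] by simp
  have "x @ z \<in> L \<longleftrightarrow> y @ z \<in> L"
    if len_xy: "length x = length y" and long: "card (B \<times> B) \<le> length z" for x y z
  proof -
    define n where "n = length (x @ z)"
    define g where "g = dl n"
    define start where "start = (foldl g (init n) x, foldl g (init n) y)"
    have "foldl (\<lambda>(p, q) c. (g p c, g q c)) start w \<in> B \<times> B" for w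
      using run_bounded
      by (simp add: start_def foldl_pair g_def B_def flip: foldl_append)
    then obtain u v w where z: "z = u @ v @ w" and "v \<noteq> []"
      and loop: "foldl (\<lambda>(p, q) c. (g p c, g q c)) start (u @ v)
                   = foldl (\<lambda>(p, q) c. (g p c, g q c)) start u"
      using foldl_loop_exists[OF finite_cartesian_product[OF \<open>finite B\<close> \<open>finite B\<close>] _ long]
      by blast
    define X where "X = concat (replicate n v) @ w"
    have "n \<le> n * length v"
      using \<open>v \<noteq> []\<close> by (simp add: Suc_leI)
    then have "n \<le> length X"
      by (simp add: X_def length_concat sum_list_replicate trans_le_add1)
    \<comment> \<open>Pumping the loop n times keeps the state but leaves only letters of X in the window.\<close>
    have pumped: "p @ z \<in> L \<longleftrightarrow> last_n a n X \<in> L"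
      if "length p = length x" and "foldl g (foldl g (init n) p) (u @ v) = foldl g (foldl g (init n) p) u"
      for p
    proof -
      have "p @ z \<in> L \<longleftrightarrow> foldl g (init n) (p @ z) \<in> acc n"
        using sliding_window_accepts[OF SW, of n "p @ z"] that(1)
        by (simp add: g_def n_def last_n_length_eq)
      also have "foldl g (init n) (p @ z) = foldl g (init n) ((p @ u) @ X)"
        using foldl_pump[OF that(2), of n w] by (simp add: z X_def)
      also have "\<dots> \<in> acc n \<longleftrightarrow> last_n a n X \<in> L"
        using sliding_window_accepts[OF SW, of n "(p @ u) @ X"] \<open>n \<le> length X\<close>
        by (simp only: g_def last_n_append_long)
      finally show ?thesis .
    qed
    show ?thesis
      using pumped[of x] pumped[of y] loop len_xy by (simp add: start_def foldl_pair)
  qed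
  then show ?thesis
    by (rule that)
qed

lemma card_quotient_less:
  assumes "finite A" "equiv A R" "equiv A S" "R \<subset> S"
  shows "card (A // S) < card (A // R)"
proof -
  obtain p q where pq: "(p, q) \<in> S" "(p, q) \<notin> R"
    using \<open>R \<subset> S\<close> by auto
  then have "p \<in> A" "q \<in> A"
    using equiv_type[OF \<open>equiv A S\<close>] by auto
  have "R `` {p} \<noteq> R `` {q}"
    using pq \<open>q \<in> A\<close> eq_equiv_class[OF _ \<open>equiv A R\<close>] by blast
  moreover have "S `` (R `` {p}) = S `` (R `` {q})"
    using assms pq(1) by (simp add: refines_equiv_class_eq2 equiv_class_eq)
  ultimately have "\<not> inj_on (\<lambda>X. S `` X) (A // R)"
    using quotientI[OF \<open>p \<in> A\<close>, of R] quotientI[OF \<open>q \<in> A\<close>, of R]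
    unfolding inj_on_def by blast
  moreover have "finite (A // R)"
    using assms(1,2) equiv_type finite_quotient by blast
  ultimately have "card ((\<lambda>X. S `` X) ` (A // R)) < card (A // R)"
    using card_image_le inj_on_iff_eq_card le_neq_implies_less by blast
  then show ?thesis
    using assms by (simp add: refines_equiv_image_eq)
qed

lemma equiv_chain_stalls:
  assumes "finite A" and equiv: "\<And>j. equiv A (E j)" and mono: "\<And>j. E j \<subseteq> E (Suc j)"
  shows "\<exists>j \<le> card A. E j = E (Suc j)"
proof (rule ccontr)
  assume "\<not> ?thesis"
  then have strict: "E j \<subset> E (Suc j)" if "j \<le> card A" for j
    using mono that by auto
  \<comment> \<open>Each strict step merges classes, and there are at most card A classes to begin with.\<close>
  have "card (A // E j) + j \<le> card A" if "j \<le> Suc (card A)" for j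
    using that
  proof (induction j)
    case 0
    show ?case
      using \<open>finite A\<close> by (metis add_0_right card_image_le proj_image)
  next
    case (Suc j)
    then show ?case
      using card_quotient_less[OF \<open>finite A\<close> equiv equiv strict[of j]] by simp
  qed
  from this[of "Suc (card A)"] show False
    by simp
qed

lemma equiv_chain_stabilizes:
  assumes "finite A" and equiv: "\<And>j. equiv A (E j)" and mono: "\<And>j. E j \<subseteq> E (Suc j)"
    and step: "\<And>j. E (Suc j) = f (E j)"
  shows "E k \<subseteq> E (card A)"
proof -
  obtain j where "j \<le> card A" and stall: "E j = E (Suc j)"
    using equiv_chain_stalls[of A E] assms by blast
  have stable: "E (i + j) = E j" for i
  proof (induction i)
    case (Suc i)
    have "E (Suc i + j) = f (E j)"
      using Suc.IH step[of "i + j"] by simp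
    also have "\<dots> = E j"
      using stall step[of j] by simp
    finally show ?case .
  qed simp
  show ?thesis
  proof (cases "k \<le> card A")
    case True
    then show ?thesis
      using lift_Suc_mono_le[of E, OF mono] by blast
  next
    case False
    then have "E k = E j"
      using stable[of "k - j"] \<open>j \<le> card A\<close> by simp
    then show ?thesis
      using lift_Suc_mono_le[of E, OF mono \<open>j \<le> card A\<close>] by simp
  qed
qed

definition sync_rel :: "'s set \<Rightarrow> ('s \<Rightarrow> 'a \<Rightarrow> 's) \<Rightarrow> nat \<Rightarrow> ('s \<times> 's) set" where
  "sync_rel Q \<delta> j = {(p, q) \<in> Q \<times> Q. \<forall>w. length w = j \<longrightarrow> foldl \<delta> p w = foldl \<delta> q w}"

lemma equiv_sync_rel: "equiv Q (sync_rel Q \<delta> j)"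
  by (rule equivI) (auto simp: sync_rel_def refl_on_def sym_def trans_def)

lemma sync_rel_mono_Suc: "sync_rel Q \<delta> j \<subseteq> sync_rel Q \<delta> (Suc j)"
proof safe
  fix p q assume pq: "(p, q) \<in> sync_rel Q \<delta> j"
  have "foldl \<delta> p (v @ [c]) = foldl \<delta> q (v @ [c])" if "length v = j" for v c
    using pq that by (simp add: sync_rel_def)
  then have "foldl \<delta> p w = foldl \<delta> q w" if "length w = Suc j" for w
    using that by (cases w rule: rev_cases) auto
  then show "(p, q) \<in> sync_rel Q \<delta> (Suc j)"
    using pq by (simp add: sync_rel_def)
qed

lemma sync_rel_Suc:
  assumes "\<And>q c. q \<in> Q \<Longrightarrow> \<delta> q c \<in> Q"
  shows "sync_rel Q \<delta> (Suc j) = {(p, q) \<in> Q \<times> Q. \<forall>c. (\<delta> p c, \<delta> q c) \<in> sync_rel Q \<delta> j}"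
proof -
  have "(\<forall>w. length w = Suc j \<longrightarrow> foldl \<delta> p w = foldl \<delta> q w)
    \<longleftrightarrow> (\<forall>c v. length v = j \<longrightarrow> foldl \<delta> (\<delta> p c) v = foldl \<delta> (\<delta> q c) v)" for p q
    by (metis Suc_length_conv foldl_Cons)
  then show ?thesis
    using assms by (auto simp: sync_rel_def)
qed

lemma dfa_sync_rel_subset_card:
  assumes "dfa Q q0 \<delta> F"
  shows "sync_rel Q \<delta> k \<subseteq> sync_rel Q \<delta> (card Q)"
proof (rule equiv_chain_stabilizes[where E = "sync_rel Q \<delta>"])
  show "finite Q"
    using assms by (simp add: dfa_def)
  show "sync_rel Q \<delta> (Suc j) = (\<lambda>E. {(p, q) \<in> Q \<times> Q. \<forall>c. (\<delta> p c, \<delta> q c) \<in> E}) (sync_rel Q \<delta> j)"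
    for j
    using assms by (simp add: sync_rel_Suc dfa_def)
qed (rule equiv_sync_rel sync_rel_mono_Suc)+

lemma dfa_run_closed: "dfa Q q0 \<delta> F \<Longrightarrow> p \<in> Q \<Longrightarrow> foldl \<delta> p w \<in> Q"
  by (induction w arbitrary: p) (auto simp: dfa_def)

lemma minimal_dfa_merges_if_long_suffixes_agree:
  assumes M: "minimal_dfa L Q q0 \<delta> F"
    and agree: "\<And>z. K \<le> length z \<Longrightarrow> x @ z \<in> L \<longleftrightarrow> y @ z \<in> L"
    and "length z = card Q"
  shows "foldl \<delta> q0 (x @ z) = foldl \<delta> q0 (y @ z)"
proof -
  have D: "dfa Q q0 \<delta> F" and L: "L = dfa_lang q0 \<delta> F"
    and distinguish: "\<And>p q. p \<in> Q \<Longrightarrow> q \<in> Q \<Longrightarrow> p \<noteq> q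
                        \<Longrightarrow> \<exists>v. (foldl \<delta> p v \<in> F) \<noteq> (foldl \<delta> q v \<in> F)"
    using M by (auto simp: minimal_dfa_def)
  have run_in_Q: "foldl \<delta> q0 w \<in> Q" for w
    using dfa_run_closed[OF D] D by (simp add: dfa_def)
  have "foldl \<delta> q0 (x @ w) = foldl \<delta> q0 (y @ w)" if "length w = K" for w
  proof (rule ccontr)
    assume "foldl \<delta> q0 (x @ w) \<noteq> foldl \<delta> q0 (y @ w)"
    then obtain v where "(foldl \<delta> q0 (x @ w @ v) \<in> F) \<noteq> (foldl \<delta> q0 (y @ w @ v) \<in> F)"
      using distinguish[OF run_in_Q run_in_Q] by (metis foldl_append)
    moreover have "x @ w @ v \<in> L \<longleftrightarrow> y @ w @ v \<in> L"
      using agree that by simp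
    ultimately show False
      by (simp add: L dfa_lang_def)
  qed
  then have "(foldl \<delta> q0 x, foldl \<delta> q0 y) \<in> sync_rel Q \<delta> K"
    using run_in_Q by (simp add: sync_rel_def)
  then show ?thesis
    using dfa_sync_rel_subset_card[OF D] \<open>length z = card Q\<close> by (auto simp: sync_rel_def)
qed

lemma in_F_O1_if_finite_states:
  fixes init :: "nat \<Rightarrow> 'b" and dl :: "nat \<Rightarrow> 'b \<Rightarrow> 'a \<Rightarrow> 'b" and acc :: "nat \<Rightarrow> 'b set"
  assumes "finite S" and init: "\<And>n. init n \<in> S" and step: "\<And>n q c. q \<in> S \<Longrightarrow> dl n q c \<in> S"
    and accepts: "\<And>n w. foldl (dl n) (init n) w \<in> acc n \<longleftrightarrow> last_n a n w \<in> L"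
  shows "in_F_O1 a L"
proof -
  define T where "T = {bs :: bool list. length bs = card S}"
  have "finite T" "card S \<le> card T"
    using card_lists_length_eq[of "UNIV :: bool set" "card S"] finite_lists_length_eq[of "UNIV :: bool set" "card S"]
    by (simp_all add: T_def less_imp_le)
  then obtain enc where "enc ` S \<subseteq> T" and inj: "inj_on enc S"
    using card_le_inj[OF \<open>finite S\<close>] by blast
  define dl' where "dl' n bs c = enc (dl n (inv_into S enc bs) c)" for n bs c
  have run_in_S: "foldl (dl n) (init n) w \<in> S" for n w
    using init step by (induction w rule: rev_induct) auto
  have run: "foldl (dl' n) (enc (init n)) w = enc (foldl (dl n) (init n) w)" for n w
    using run_in_S by (induction w rule: rev_induct) (simp_all add: dl'_def inv_into_f_f[OF inj])
  have "sliding_window_alg a L (\<lambda>n. enc ` S) (\<lambda>n. enc (init n)) dl' (\<lambda>n. enc ` (acc n \<inter> S))"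
    unfolding sliding_window_alg_def
    using init step accepts run run_in_S
    by (auto simp: dl'_def inv_into_into inj_on_image_mem_iff[OF inj])
  moreover have "\<forall>n. \<forall>bs \<in> enc ` S. length bs \<le> card S"
    using \<open>enc ` S \<subseteq> T\<close> by (auto simp: T_def)
  ultimately show ?thesis
    unfolding in_F_O1_def by blast
qed

text \<open>
  The window keeps the last min n k symbols (initially padded with a); when n > k the
  accepting set re-pads with n - k copies of a, which is harmless because only the last k
  symbols matter.
\<close>
lemma in_F_O1_if_suffix_determines:
  fixes L :: "('a::finite) list set"
  assumes suffix: "\<And>x y z. length x = length y \<Longrightarrow> length z = k \<Longrightarrow> x @ z \<in> L \<longleftrightarrow> y @ z \<in> L"
  shows "in_F_O1 a L"
proof (rule in_F_O1_if_finite_states)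
  let ?init = "\<lambda>n. replicate (min n k) a" and ?dl = "\<lambda>n v c. tl (v @ [c])"
  show "finite {v :: 'a list. length v \<le> k}"
    using finite_lists_length_le[of "UNIV :: 'a set" k] by simp
  show "?init n \<in> {v. length v \<le> k}" "v \<in> {v. length v \<le> k} \<Longrightarrow> ?dl n v c \<in> {v. length v \<le> k}"
    for n v c
    by auto
  have run: "foldl (?dl n) (?init n) w = last_n a (min n k) w" for n w
    by (induction w rule: rev_induct) (simp_all add: last_n_Nil last_n_snoc)
  have "replicate (n - k) a @ last_n a (min n k) w \<in> L \<longleftrightarrow> last_n a n w \<in> L" for n w
  proof (cases "n \<le> k")
    case False
    then have "last_n a n w = take (n - k) (last_n a n w) @ last_n a k w"
      by (simp add: last_n_split)
    then show ?thesis
      using False suffix[of "replicate (n - k) a" "take (n - k) (last_n a n w)" "last_n a k w"]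
      by simp
  qed simp
  then show "foldl (?dl n) (?init n) w \<in> {v. replicate (n - k) a @ v \<in> L} \<longleftrightarrow> last_n a n w \<in> L"
    for n w
    by (simp add: run)
qed

theorem proposition6p5:
  fixes L :: "('a::finite) list set" and a :: 'a
    and Q :: "'s set" and q0 :: 's and \<delta> :: "'s \<Rightarrow> 'a \<Rightarrow> 's" and F :: "'s set"
  assumes "regular L"
    and "minimal_dfa L Q q0 \<delta> F"
  shows "in_F_O1 a L \<longleftrightarrow>
    (\<forall>x y z. length x = length y \<longrightarrow> length z = card Q \<longrightarrow>
       foldl \<delta> q0 (x @ z) = foldl \<delta> q0 (y @ z))"
proof
  assume "in_F_O1 a L"
  then obtain K where "\<And>x y z. length x = length y \<Longrightarrow> K \<le> length z \<Longrightarrow> x @ z \<in> L \<longleftrightarrow> y @ z \<in> L"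
    by (rule in_F_O1_long_suffix_determines) (rule that)
  then show "\<forall>x y z. length x = length y \<longrightarrow> length z = card Q \<longrightarrow>
      foldl \<delta> q0 (x @ z) = foldl \<delta> q0 (y @ z)"
    by (blast intro: minimal_dfa_merges_if_long_suffixes_agree[OF assms(2)])
next
  assume merge: "\<forall>x y z. length x = length y \<longrightarrow> length z = card Q \<longrightarrow>
      foldl \<delta> q0 (x @ z) = foldl \<delta> q0 (y @ z)"
  have "L = dfa_lang q0 \<delta> F"
    using assms(2) by (simp add: minimal_dfa_def)
  then have "x @ z \<in> L \<longleftrightarrow> y @ z \<in> L" if "length x = length y" "length z = card Q" for x y z
    using merge that unfolding dfa_lang_def by (metis mem_Collect_eq)
  then show "in_F_O1 a L"
    by (rule in_F_O1_if_suffix_determines)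
qed

end
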